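(* Fix $i\in\{1,\dots,k\}$ and $\hat a\in[2^n]$. Let $\mathcal{M}(\hat a)=\{m\in\mathcal{M}^{\text{good}}:a_i(m)=\hat a\}$, and suppose $|\{b_i(m):m\in\mathcal{M}(\hat a)\}|=L$. Then there exist $(L-1)\,|\mathcal{M}(\hat a)|$ distinct elements of $\mathcal{B}^{\text{err}}$, each of which the decoder of terminal $t$ maps to some message in $\mathcal{M}(\hat a)$.
   Context: Setting. $\mathcal{N}$ is a directed network containing nodes $s_1,\dots,s_k,t_1,\dots,t_k$. The network $\mathcal{G}$ is obtained from $\mathcal{N}$ by adding new nodes $s,t,A_1,\dots,A_k,B_1,\dots,B_k$ and, for each $i$, the unit-capacity edges $a_i=(s,A_i)$, two parallel edges $x_i,y_i$ from $A_i$ to $B_i$, $z_i=(A_i,s_i)$, $z'_i=(t_i,B_i)$, and $b_i=(B_i,t)$; the incoming edges of $t$ are exactly $b_1,\dots,b_k$. Admissible error patterns $\boldsymbol r=(r_e)$ are those in which at most one edge $e$ has $r_e\neq0$, with $e\notin\{a_1,\dots,a_k,b_1,\dots,b_k\}$. The output of an edge is its input XOR $r_e$. Let $\mathcal{C}$ be a length-$n$ network code on $\mathcal{G}$. The source $s$ has message $m\in[2^{kn}]$, where $[N]=\{1,\dots,N\}$. An edge $e=(u,v)$ of capacity $c_e$ carries a value in $[2^{nc_e}]$ computed from the signals on the incoming edges of $u$ (and from $m$ if $u=s$). The terminal $t$ has a decoder mapping each tuple in $[2^n]^k$ received on $(b_1,\dots,b_k)$ to a message. For an edge $e$, $e(m,\boldsymbol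 r)$ is the signal received on $e$ under message $m$ and error pattern $\boldsymbol r$, and $e(m)=e(m,\boldsymbol 0)$. Write $\boldsymbol b(m)=(b_1(m),\dots,b_k(m))$. Let $\mathcal{M}^{\text{good}}$ be the set of messages $m$ such that $t$ decodes to $m$ under every admissible error pattern when $m$ is sent. Let $\mathcal{B}^{\text{good}}=\{\boldsymbol b(m):m\in\mathcal{M}^{\text{good}}\}$ and $\mathcal{B}^{\text{err}}=[2^n]^k\setminus\mathcal{B}^{\text{good}}$. *)

theory Defs
  imports Main
begin

record ('v, 'e) net =
  edgesN :: "'e set"
  tailN  :: "'e \<Rightarrow> 'v"
  headN  :: "'e \<Rightarrow> 'v"
  capN   :: "'e \<Rightarrow> nat"
  srcs   :: "nat \<Rightarrow> 'v"
  sinks  :: "nat \<Rightarrow> 'v"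

definition net_ok :: "('v, 'e) net \<Rightarrow> bool" where
  "net_ok N \<longleftrightarrow> finite (edgesN N) \<and>
     acyclic {(tailN N e, headN N e) | e. e \<in> edgesN N}"

datatype 'v gnode = NN 'v | Src | Tgt | ANode nat | BNode nat
datatype 'e gedge = NE 'e | Ea nat | Ex nat | Ey nat | Ez nat | Ez' nat | Eb nat

fun gtail :: "('v, 'e) net \<Rightarrow> 'e gedge \<Rightarrow> 'v gnode" where
  "gtail N (NE e) = NN (tailN N e)"
| "gtail N (Ea i) = Src"
| "gtail N (Ex i) = ANode i"
| "gtail N (Ey i) = ANode i"
| "gtail N (Ez i) = ANode i"
| "gtail N (Ez' i) = NN (sinks N i)"
| "gtail N (Eb i) = BNode i"

fun ghead :: "('v, 'e) net \<Rightarrow> 'e gedge \<Rightarrow> 'v gnode" where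
  "ghead N (NE e) = NN (headN N e)"
| "ghead N (Ea i) = ANode i"
| "ghead N (Ex i) = BNode i"
| "ghead N (Ey i) = BNode i"
| "ghead N (Ez i) = NN (srcs N i)"
| "ghead N (Ez' i) = BNode i"
| "ghead N (Eb i) = Tgt"

fun gcap :: "('v, 'e) net \<Rightarrow> 'e gedge \<Rightarrow> nat" where
  "gcap N (NE e) = capN N e"
| "gcap N (Ea i) = 1"
| "gcap N (Ex i) = 1"
| "gcap N (Ey i) = 1"
| "gcap N (Ez i) = 1"
| "gcap N (Ez' i) = 1"
| "gcap N (Eb i) = 1"

definition gedges :: "('v, 'e) net \<Rightarrow> nat \<Rightarrow> 'e gedge set" where
  "gedges N k = NE ` edgesN N \<union>
     (\<Union>i\<in>{1..k}. {Ea i, Ex i, Ey i, Ez i, Ez' i, Eb i})"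

definition in_edges :: "('v, 'e) net \<Rightarrow> nat \<Rightarrow> 'v gnode \<Rightarrow> 'e gedge set" where
  "in_edges N k u = {e \<in> gedges N k. ghead N e = u}"

text \<open>Messages: [2^(kn)] = {1..2^(kn)}. Edge signals of capacity c are bit strings
  of length n*c, represented as naturals in {0..<2^(n*c)} (so XOR makes sense).\<close>
definition messages :: "nat \<Rightarrow> nat \<Rightarrow> nat set" where
  "messages k n = {1..2^(k*n)}"

definition tuples :: "nat \<Rightarrow> nat \<Rightarrow> nat list set" where
  "tuples k n = {v. length v = k \<and> (\<forall>x\<in>set v. x < 2^n)}"

text \<open>A network code: the local encoding function of each edge (from the message
  and the signals on all edges, of which only the incoming edges of the tail are
  used, and the message only at the source), and the decoder at t.\<close>
record 'e code =
  enc :: "'e gedge \<Rightarrow> nat \<Rightarrow> ('e gedge \<Rightarrow> nat) \<Rightarrow> nat"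
  dec :: "nat list \<Rightarrow> nat"

definition is_code :: "('v, 'e) net \<Rightarrow> nat \<Rightarrow> nat \<Rightarrow> 'e code \<Rightarrow> bool" where
  "is_code N k n C \<longleftrightarrow>
     (\<forall>e\<in>gedges N k. \<forall>m \<sigma>. enc C e m \<sigma> < 2^(n * gcap N e)) \<and>
     (\<forall>e\<in>gedges N k. \<forall>m m' \<sigma> \<sigma>'.
        (\<forall>e'\<in>in_edges N k (gtail N e). \<sigma> e' = \<sigma>' e') \<and> (gtail N e \<noteq> Src \<or> m = m')
        \<longrightarrow> enc C e m \<sigma> = enc C e m' \<sigma>') \<and>
     (\<forall>v\<in>tuples k n. dec C v \<in> messages k n)"

definition consistent :: "('v, 'e) net \<Rightarrow> nat \<Rightarrow> 'e code \<Rightarrow> nat \<Rightarrow> ('e gedge \<Rightarrow> nat)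
    \<Rightarrow> ('e gedge \<Rightarrow> nat) \<Rightarrow> bool" where
  "consistent N k C m r \<sigma> \<longleftrightarrow>
     (\<forall>e\<in>gedges N k. \<sigma> e = xor (enc C e m \<sigma>) (r e)) \<and>
     (\<forall>e. e \<notin> gedges N k \<longrightarrow> \<sigma> e = 0)"

definition signal :: "('v, 'e) net \<Rightarrow> nat \<Rightarrow> 'e code \<Rightarrow> nat \<Rightarrow> ('e gedge \<Rightarrow> nat)
    \<Rightarrow> 'e gedge \<Rightarrow> nat" where
  "signal N k C m r = (THE \<sigma>. consistent N k C m r \<sigma>)"

definition admissible :: "('v, 'e) net \<Rightarrow> nat \<Rightarrow> nat \<Rightarrow> ('e gedge \<Rightarrow> nat) \<Rightarrow> bool" where
  "admissible N k n r \<longleftrightarrow>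
     (\<forall>e. r e < 2^(n * gcap N e)) \<and>
     (\<forall>e. r e \<noteq> 0 \<longrightarrow> e \<in> gedges N k \<and> (\<forall>i. e \<noteq> Ea i \<and> e \<noteq> Eb i)) \<and>
     (\<exists>e0. \<forall>e. r e \<noteq> 0 \<longrightarrow> e = e0)"

definition bvec :: "('v, 'e) net \<Rightarrow> nat \<Rightarrow> 'e code \<Rightarrow> nat \<Rightarrow> ('e gedge \<Rightarrow> nat) \<Rightarrow> nat list" where
  "bvec N k C m r = map (\<lambda>i. signal N k C m r (Eb i)) [1..<Suc k]"

definition Mgood :: "('v, 'e) net \<Rightarrow> nat \<Rightarrow> nat \<Rightarrow> 'e code \<Rightarrow> nat set" where
  "Mgood N k n C = {m \<in> messages k n.
      \<forall>r. admissible N k n r \<longrightarrow> dec C (bvec N k C m r) = m}"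

definition Bgood :: "('v, 'e) net \<Rightarrow> nat \<Rightarrow> nat \<Rightarrow> 'e code \<Rightarrow> nat list set" where
  "Bgood N k n C = (\<lambda>m. bvec N k C m (\<lambda>_. 0)) ` Mgood N k n C"

definition Berr :: "('v, 'e) net \<Rightarrow> nat \<Rightarrow> nat \<Rightarrow> 'e code \<Rightarrow> nat list set" where
  "Berr N k n C = tuples k n - Bgood N k n C"

end

theory Submission imports Defs begin

text \<open>If two messages m, m' induce the same signal on a_i, they induce the same signals on
  x_i and y_i, so a single error on z'_i that turns its signal under m into the one under m'
  makes t receive b(m) with the i-th coordinate replaced by b_i(m'). A good m is still
  decoded correctly, so this tuple decodes to m. Over all m in M(ahat) and all of the L - 1
  values b of b_i on M(ahat) other than b_i(m), these tuples are pairwise distinct (m and b are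
  recovered as the decoded message and the i-th coordinate), and none lies in B^good: it would
  have to be b(m) itself.\<close>

lemma xor_less_exp_nat:
  fixes a b :: nat
  assumes "a < 2 ^ n" "b < 2 ^ n"
  shows "xor a b < 2 ^ n"
proof -
  have "take_bit n a = a" "take_bit n b = b"
    using assms by (simp_all add: take_bit_nat_eq_self_iff)
  then have "xor a b = take_bit n (xor a b)" by simp
  then show ?thesis by (metis take_bit_nat_less_exp)
qed

lemma card_image_Sigma_minus_singleton:
  assumes "finite A" "finite B" "f ` A \<subseteq> B"
    and "\<And>a b. a \<in> A \<Longrightarrow> b \<in> B \<Longrightarrow> h (g a b) = a"
    and "\<And>a b. a \<in> A \<Longrightarrow> b \<in> B \<Longrightarrow> p (g a b) = b"
  shows "card ((\<lambda>(a, b). g a b) ` (SIGMA a:A. B - {f a})) = (card B - 1) * card A"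
proof -
  have "inj_on (\<lambda>(a, b). g a b) (SIGMA a:A. B - {f a})"
    by (rule inj_onI) (auto dest: arg_cong[where f = h] arg_cong[where f = p] simp: assms(4,5))
  then have "card ((\<lambda>(a, b). g a b) ` (SIGMA a:A. B - {f a})) = (\<Sum>a\<in>A. card (B - {f a}))"
    using assms(1,2) by (simp add: card_image)
  also have "\<dots> = (\<Sum>a\<in>A. card B - 1)"
    using assms(2,3) by (intro sum.cong) auto
  finally show ?thesis by simp
qed

definition feeds :: "('v, 'e) net \<Rightarrow> nat \<Rightarrow> ('e gedge \<times> 'e gedge) set" where
  "feeds N k = {(e', e). e' \<in> gedges N k \<and> ghead N e' = gtail N e}"

lemma in_edges_tail_iff_feeds: "e' \<in> in_edges N k (gtail N e) \<longleftrightarrow> (e', e) \<in> feeds N k"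
  unfolding in_edges_def feeds_def by auto

text \<open>G is layered as s, A_i, N, B_i, t, and inside the layer of N the nodes are ordered by
  the acyclic edge relation of N; node_vertex is only meaningful on that layer.\<close>

fun node_layer :: "'v gnode \<Rightarrow> nat" where
  "node_layer Src = 0" | "node_layer (ANode _) = 1" | "node_layer (NN _) = 2"
| "node_layer (BNode _) = 3" | "node_layer Tgt = 4"

fun node_vertex :: "'v gnode \<Rightarrow> 'v" where
  "node_vertex (NN v) = v" | "node_vertex _ = undefined"

lemma wf_feeds:
  assumes "net_ok N"
  shows "wf (feeds N k)"
proof -
  let ?EN = "{(tailN N e, headN N e) | e. e \<in> edgesN N}"
  let ?rank = "\<lambda>u. (node_layer u, node_vertex u)"
  have "finite ?EN"
    using assms unfolding net_ok_def by auto
  then have "wf ?EN"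
    using assms finite_acyclic_wf unfolding net_ok_def by blast
  then have wf_rank: "wf (inv_image (less_than <*lex*> ?EN) (?rank \<circ> gtail N))"
    by (intro wf_inv_image wf_lex_prod wf_less_than)
  have "(?rank (gtail N e), ?rank (gtail N e')) \<in> less_than <*lex*> ?EN"
    if "(e, e') \<in> feeds N k" for e e'
  proof -
    have "e \<in> gedges N k" "gtail N e' = ghead N e" using that unfolding feeds_def by auto
    then show ?thesis by (cases e) (auto simp: gedges_def)
  qed
  then have "feeds N k \<subseteq> inv_image (less_than <*lex*> ?EN) (?rank \<circ> gtail N)"
    by (auto simp del: in_lex_prod)
  then show ?thesis using wf_rank wf_subset by blast
qed

lemma consistent_exists:
  assumes "net_ok N" "is_code N k n C"
  shows "\<exists>\<sigma>. consistent N k C m r \<sigma>"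
proof -
  define F where "F = (\<lambda>\<sigma> e. if e \<in> gedges N k then xor (enc C e m \<sigma>) (r e) else (0::nat))"
  define \<sigma> where "\<sigma> = wfrec (feeds N k) F"
  have unfold: "\<sigma> e = F (cut \<sigma> (feeds N k) e) e" for e
    unfolding \<sigma>_def by (rule wfrec[OF wf_feeds[OF assms(1)]])
  have "enc C e m (cut \<sigma> (feeds N k) e) = enc C e m \<sigma>" if "e \<in> gedges N k" for e
    using assms(2) that unfolding is_code_def by (metis cut_apply in_edges_tail_iff_feeds)
  then have "consistent N k C m r \<sigma>"
    unfolding consistent_def using unfold by (simp add: F_def)
  then show ?thesis by blast
qed

lemma consistent_unique:
  assumes "net_ok N" "is_code N k n C"
    and "consistent N k C m r \<sigma>" "consistent N k C m r \<sigma>'"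
  shows "\<sigma> = \<sigma>'"
proof
  fix e
  show "\<sigma> e = \<sigma>' e"
    using wf_feeds[OF assms(1)]
  proof (induction e rule: wf_induct_rule[where r = "feeds N k"])
    case (less e)
    show ?case
    proof (cases "e \<in> gedges N k")
      case True
      then have "enc C e m \<sigma> = enc C e m \<sigma>'"
        using assms(2) less unfolding is_code_def by (metis in_edges_tail_iff_feeds)
      then show ?thesis using assms(3,4) True unfolding consistent_def by simp
    next
      case False
      then show ?thesis using assms(3,4) unfolding consistent_def by simp
    qed
  qed
qed

lemma consistent_signal:
  assumes "net_ok N" "is_code N k n C"
  shows "consistent N k C m r (signal N k C m r)"
  unfolding signal_def
  using consistent_exists[OF assms] consistent_unique[OF assms] by (metis theI)

lemma signal_eqI:
  assumes "net_ok N" "is_code N k n C" "consistent N k C m r \<sigma>"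
  shows "signal N k C m r = \<sigma>"
  using consistent_unique[OF assms(1,2) consistent_signal[OF assms(1,2)] assms(3)] .

lemma signal_no_error:
  assumes "net_ok N" "is_code N k n C" "e \<in> gedges N k"
  shows "signal N k C m (\<lambda>_. 0) e = enc C e m (signal N k C m (\<lambda>_. 0))"
  using consistent_signal[OF assms(1,2)] assms(3) unfolding consistent_def by simp

lemma signal_less:
  assumes "net_ok N" "is_code N k n C" "admissible N k n r" "e \<in> gedges N k"
  shows "signal N k C m r e < 2 ^ (n * gcap N e)"
proof -
  have "signal N k C m r e = xor (enc C e m (signal N k C m r)) (r e)"
    using consistent_signal[OF assms(1,2)] assms(4) unfolding consistent_def by blast
  moreover have "enc C e m (signal N k C m r) < 2 ^ (n * gcap N e)"
    using assms(2,4) unfolding is_code_def by blast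
  moreover have "r e < 2 ^ (n * gcap N e)"
    using assms(3) unfolding admissible_def by blast
  ultimately show ?thesis by (simp add: xor_less_exp_nat)
qed

lemma admissible_no_error: "admissible N k n (\<lambda>_. 0)"
  unfolding admissible_def by auto

lemma admissible_single_error:
  assumes "e \<in> gedges N k" "\<And>j. e \<noteq> Ea j \<and> e \<noteq> Eb j" "x < 2 ^ (n * gcap N e)"
  shows "admissible N k n ((\<lambda>_. 0)(e := x))"
  using assms unfolding admissible_def by auto

lemma bvec_in_tuples:
  assumes "net_ok N" "is_code N k n C" "admissible N k n r"
  shows "bvec N k C m r \<in> tuples k n"
  using signal_less[OF assms, of "Eb _" m]
  unfolding tuples_def bvec_def gedges_def by auto

lemma length_bvec [simp]: "length (bvec N k C m r) = k"
  unfolding bvec_def by simp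

lemma bvec_nth:
  assumes "i \<in> {1..k}"
  shows "bvec N k C m r ! (i - 1) = signal N k C m r (Eb i)"
proof -
  have "[1..<Suc k] ! (i - 1) = i" "i - 1 < length [1..<Suc k]"
    using assms by (auto simp add: nth_upt simp del: upt_Suc)
  then show ?thesis unfolding bvec_def by (simp del: upt_Suc)
qed

lemma gadget_edges_in_gedges:
  "i \<in> {1..k} \<Longrightarrow> {Ea i, Ex i, Ey i, Ez i, Ez' i, Eb i} \<subseteq> gedges N k"
  unfolding gedges_def by auto

lemma in_edges_ANode: "i \<in> {1..k} \<Longrightarrow> in_edges N k (ANode i) = {Ea i}"
  unfolding in_edges_def gedges_def by auto

lemma in_edges_BNode: "i \<in> {1..k} \<Longrightarrow> in_edges N k (BNode i) = {Ex i, Ey i, Ez' i}"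
  unfolding in_edges_def gedges_def by auto

lemma parallel_signals_eq:
  assumes "net_ok N" "is_code N k n C" "i \<in> {1..k}"
    and "signal N k C m (\<lambda>_. 0) (Ea i) = signal N k C m' (\<lambda>_. 0) (Ea i)"
    and "e = Ex i \<or> e = Ey i"
  shows "signal N k C m (\<lambda>_. 0) e = signal N k C m' (\<lambda>_. 0) e"
proof -
  have e: "e \<in> gedges N k" "gtail N e = ANode i"
    using assms(3,5) gadget_edges_in_gedges by auto
  then have "enc C e m (signal N k C m (\<lambda>_. 0)) = enc C e m' (signal N k C m' (\<lambda>_. 0))"
    using assms(2,4) in_edges_ANode[OF assms(3)] unfolding is_code_def by (metis singletonD gnode.distinct)
  then show ?thesis using signal_no_error[OF assms(1,2) e(1)] by metis
qed

text \<open>Only B_i reads z'_i and nothing reads b_i, so the error on z'_i changes just these two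
  signals, and B_i then sees the same inputs as under m'.\<close>

lemma redirect_consistent:
  assumes "net_ok N" "is_code N k n C" "i \<in> {1..k}"
    and "signal N k C m (\<lambda>_. 0) (Ea i) = signal N k C m' (\<lambda>_. 0) (Ea i)"
  defines "\<sigma> \<equiv> signal N k C m (\<lambda>_. 0)" and "\<sigma>' \<equiv> signal N k C m' (\<lambda>_. 0)"
  shows "consistent N k C m ((\<lambda>_. 0)(Ez' i := xor (\<sigma> (Ez' i)) (\<sigma>' (Ez' i))))
           (\<sigma>(Ez' i := \<sigma>' (Ez' i), Eb i := \<sigma>' (Eb i)))"
    (is "consistent N k C m ?r ?\<tau>")
proof -
  have gadget: "Ez' i \<in> gedges N k" "Eb i \<in> gedges N k"
    using gadget_edges_in_gedges[OF assms(3)] by auto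
  have \<sigma>: "consistent N k C m (\<lambda>_. 0) \<sigma>" and \<sigma>': "consistent N k C m' (\<lambda>_. 0) \<sigma>'"
    unfolding \<sigma>_def \<sigma>'_def by (simp_all add: consistent_signal[OF assms(1,2)])
  have "?\<tau> e = xor (enc C e m ?\<tau>) (?r e)" if e: "e \<in> gedges N k" for e
  proof (cases "e = Eb i")
    case True
    have "\<sigma> (Ex i) = \<sigma>' (Ex i)" "\<sigma> (Ey i) = \<sigma>' (Ey i)"
      unfolding \<sigma>_def \<sigma>'_def using parallel_signals_eq[OF assms(1-4)] by auto
    then have "\<forall>e'\<in>in_edges N k (gtail N e). ?\<tau> e' = \<sigma>' e'"
      using True by (simp add: in_edges_BNode[OF assms(3)])
    then have "enc C e m ?\<tau> = enc C e m' \<sigma>'"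
      using assms(2) e True unfolding is_code_def by simp
    then show ?thesis
      using \<sigma>' e True unfolding consistent_def by simp
  next
    case False
    have "\<forall>e'\<in>in_edges N k (gtail N e). ?\<tau> e' = \<sigma> e'"
      using False by (cases e) (auto simp: in_edges_def)
    then have "enc C e m ?\<tau> = enc C e m \<sigma>"
      using assms(2) e unfolding is_code_def by blast
    moreover have "\<sigma> e = enc C e m \<sigma>"
      using \<sigma> e unfolding consistent_def by simp
    ultimately show ?thesis
      using False by (auto simp: xor.assoc[symmetric])
  qed
  moreover have "?\<tau> e = 0" if "e \<notin> gedges N k" for e
    using \<sigma> that gadget unfolding consistent_def by auto
  ultimately show ?thesis unfolding consistent_def by blast
qed

lemma redirected_bvec:
  fixes N :: "('v, 'e) net" and C :: "'e code"
  assumes "net_ok N" "is_code N k n C" "i \<in> {1..k}"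
    and "signal N k C m (\<lambda>_. 0) (Ea i) = signal N k C m' (\<lambda>_. 0) (Ea i)"
  shows "\<exists>r. admissible N k n r \<and>
           bvec N k C m r = (bvec N k C m (\<lambda>_. 0))[i - 1 := signal N k C m' (\<lambda>_. 0) (Eb i)]"
proof -
  define \<sigma> where "\<sigma> = signal N k C m (\<lambda>_. 0)"
  define \<sigma>' where "\<sigma>' = signal N k C m' (\<lambda>_. 0)"
  define r :: "'e gedge \<Rightarrow> nat" where "r = (\<lambda>_. 0)(Ez' i := xor (\<sigma> (Ez' i)) (\<sigma>' (Ez' i)))"
  have Ez': "Ez' i \<in> gedges N k"
    using gadget_edges_in_gedges[OF assms(3)] by auto
  have "\<sigma> (Ez' i) < 2 ^ n" "\<sigma>' (Ez' i) < 2 ^ n"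
    unfolding \<sigma>_def \<sigma>'_def using signal_less[OF assms(1,2) admissible_no_error Ez'] by simp_all
  then have "admissible N k n r"
    unfolding r_def using Ez' by (intro admissible_single_error) (simp_all add: xor_less_exp_nat)
  moreover have signal_r: "signal N k C m r = \<sigma>(Ez' i := \<sigma>' (Ez' i), Eb i := \<sigma>' (Eb i))"
    unfolding r_def \<sigma>_def \<sigma>'_def
    by (intro signal_eqI[OF assms(1,2)] redirect_consistent[OF assms])
  have "bvec N k C m r = (bvec N k C m (\<lambda>_. 0))[i - 1 := \<sigma>' (Eb i)]"
  proof (rule nth_equalityI)
    fix j assume "j < length (bvec N k C m r)"
    then have j: "Suc j \<in> {1..k}" by simp
    have "i - 1 = j \<longleftrightarrow> i = Suc j" using assms(3) by auto
    then show "bvec N k C m r ! j = (bvec N k C m (\<lambda>_. 0))[i - 1 := \<sigma>' (Eb i)] ! j"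
      using bvec_nth[OF j, of N C m] bvec_nth[OF j, of N C m r] j
      by (auto simp: signal_r \<sigma>_def)
  qed simp
  ultimately show ?thesis unfolding \<sigma>'_def by blast
qed

lemma redirected_bvec_decodes:
  assumes "net_ok N" "is_code N k n C" "i \<in> {1..k}" "m \<in> Mgood N k n C"
    and "signal N k C m (\<lambda>_. 0) (Ea i) = signal N k C m' (\<lambda>_. 0) (Ea i)"
  defines "v \<equiv> (bvec N k C m (\<lambda>_. 0))[i - 1 := signal N k C m' (\<lambda>_. 0) (Eb i)]"
  shows "dec C v = m" and "v \<in> tuples k n"
proof -
  obtain r where "admissible N k n r" "bvec N k C m r = v"
    using redirected_bvec[OF assms(1-3,5)] unfolding v_def by blast
  then show "dec C v = m" "v \<in> tuples k n"
    using assms(4) bvec_in_tuples[OF assms(1,2)] unfolding Mgood_def by auto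
qed

lemma redirected_bvec_in_Berr:
  assumes "net_ok N" "is_code N k n C" "i \<in> {1..k}" "m \<in> Mgood N k n C"
    and "signal N k C m (\<lambda>_. 0) (Ea i) = signal N k C m' (\<lambda>_. 0) (Ea i)"
    and "signal N k C m' (\<lambda>_. 0) (Eb i) \<noteq> signal N k C m (\<lambda>_. 0) (Eb i)"
  shows "(bvec N k C m (\<lambda>_. 0))[i - 1 := signal N k C m' (\<lambda>_. 0) (Eb i)] \<in> Berr N k n C"
    (is "?v \<in> _")
proof -
  have "?v \<notin> Bgood N k n C"
  proof
    assume "?v \<in> Bgood N k n C"
    then obtain m'' where "m'' \<in> Mgood N k n C" and v: "?v = bvec N k C m'' (\<lambda>_. 0)"
      unfolding Bgood_def by auto
    then have "m'' = m"
      using redirected_bvec_decodes(1)[OF assms(1-5)] admissible_no_error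
      unfolding Mgood_def by force
    then have "?v ! (i - 1) = signal N k C m (\<lambda>_. 0) (Eb i)"
      using v bvec_nth[OF assms(3)] by simp
    moreover have "?v ! (i - 1) = signal N k C m' (\<lambda>_. 0) (Eb i)"
      using assms(3) by (auto simp: nth_list_update_eq)
    ultimately show False using assms(6) by simp
  qed
  then show ?thesis
    using redirected_bvec_decodes(2)[OF assms(1-5)] unfolding Berr_def by simp
qed

theorem lemma4:
  fixes N :: "('v, 'e) net" and C :: "'e code" and k n i ahat L :: nat and Ma :: "nat set"
  assumes "net_ok N"
    and "is_code N k n C"
    and "i \<in> {1..k}"
    and "ahat < 2^n"
    and "Ma = {m \<in> Mgood N k n C. signal N k C m (\<lambda>_. 0) (Ea i) = ahat}"
    and "card ((\<lambda>m. signal N k C m (\<lambda>_. 0) (Eb i)) ` Ma) = L"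
  shows "\<exists>X. X \<subseteq> Berr N k n C \<and> finite X \<and> card X = (L - 1) * card Ma \<and>
             (\<forall>v\<in>X. dec C v \<in> Ma)"
proof -
  define b where "b = (\<lambda>m. signal N k C m (\<lambda>_. 0) (Eb i))"
  define redirect where "redirect = (\<lambda>m b'. (bvec N k C m (\<lambda>_. 0))[i - 1 := b'])"
  define X where "X = (\<lambda>(m, b'). redirect m b') ` (SIGMA m:Ma. b ` Ma - {b m})"
  have finite_Ma: "finite Ma"
    using assms(5) unfolding Mgood_def messages_def by (auto intro: finite_subset)
  have decodes: "dec C (redirect m (b m')) = m" if "m \<in> Ma" "m' \<in> Ma" for m m'
    using that redirected_bvec_decodes(1)[OF assms(1-3)] assms(5) unfolding redirect_def b_def by simp
  have "card X = (L - 1) * card Ma"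
    unfolding X_def assms(6)[folded b_def, symmetric]
    by (rule card_image_Sigma_minus_singleton[where h = "dec C" and p = "\<lambda>v. v ! (i - 1)"])
      (use finite_Ma decodes assms(3) in \<open>auto simp: redirect_def\<close>)
  moreover have "X \<subseteq> Berr N k n C"
  proof
    fix v assume "v \<in> X"
    then obtain m m' where "m \<in> Ma" "m' \<in> Ma" "b m' \<noteq> b m" "v = redirect m (b m')"
      unfolding X_def by auto
    then show "v \<in> Berr N k n C"
      using redirected_bvec_in_Berr[OF assms(1-3)] assms(5) unfolding redirect_def b_def by simp
  qed
  moreover have "\<forall>v\<in>X. dec C v \<in> Ma"
    using decodes unfolding X_def by auto
  ultimately show ?thesis
    using finite_Ma unfolding X_def by blast
qed

end
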